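(* Under the standing assumptions below, let $\pi\in\Pi$, let $\delta>0$, and let $\tilde\pi$ be an optimal solution of the trust-region subproblem $$\max_{\pi'\in\Pi} L_{\pi}(\pi')\quad\text{s.t.}\quad \sum_{s}\rho_{\pi}(s)\,D_{TV}(\pi(\cdot|s)\,\|\,\pi'(\cdot|s))\le\delta.$$ Then $$L_{\pi}(\tilde\pi)-L_{\pi}(\pi)\ \ge\ \min\bigl(1,(1-\gamma)\delta\bigr)\,\mathbb A^*_{\pi}.$$
   Context: Consider an infinite-horizon discounted Markov decision process $(\mathcal S,\mathcal A,P,r,\rho_0,\gamma)$ with finite state space $\mathcal S$, finite action space $\mathcal A$, transition probabilities $P(s'|s,a)$, bounded reward function $r:\mathcal S\times\mathcal A\to\mathbb R$, initial-state distribution $\rho_0$ with $\rho_0(s)>0$ for all $s\in\mathcal S$, and discount factor $\gamma\in(0,1)$. A policy $\pi$ assigns to each state $s$ a probability distribution $\pi(\cdot|s)$ on $\mathcal A$; $\Pi$ denotes the set of all policies. The total expected reward is $\eta(\pi)=\mathbb E_\pi[\sum_{t=0}^\infty\gamma^t r(s_t,a_t)]$, where $s_0\sim\rho_0$, $a_t\sim\pi(\cdot|s_t)$, $s_{t+1}\sim P(\cdot|s_t,a_t)$. The unnormalized discounted visitation frequency is $\rho_\pi(s)=\sum_{t=0}^\infty\gamma^t\mathbb P(s_t=s\mid\pi)$. $Q_\pi(s,a)=\mathbb E_\pi[\sum_{l\ge0}\gamma^l r(s_l,a_l)\mid s_0=s,a_0=a]$, $V_\pi(s)=\mathbb E_\pi[\sum_{l\ge0}\gamma^l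 r(s_l,a_l)\mid s_0=s]$, and the advantage is $A_\pi(s,a)=Q_\pi(s,a)-V_\pi(s)$. The surrogate function is $L_\pi(\tilde\pi)=\eta(\pi)+\sum_s\rho_\pi(s)\sum_a\tilde\pi(a|s)A_\pi(s,a)$. The policy advantage of $\pi'$ with respect to $\pi$ is $\mathbb A_\pi(\pi')=\sum_s\rho_\pi(s)\sum_a\pi'(a|s)A_\pi(s,a)$, and $\mathbb A^*_\pi=\max_{\pi'\in\Pi}\mathbb A_\pi(\pi')$. The total variation distance is $D_{TV}(p\|q)=\frac12\sum_x|p(x)-q(x)|$. *)

theory Defs
  imports "HOL-Analysis.Analysis"
begin

(* Finite MDP: states 's::finite, actions 'a::finite.
   P s a s' = P(s'|s,a); r s a = reward; rho0 s = initial distribution; gamma discount.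
   A policy pol is a function with pol s a = pol(a|s). *)

definition is_dist :: "('x::finite \<Rightarrow> real) \<Rightarrow> bool" where
  "is_dist p \<longleftrightarrow> (\<forall>x. 0 \<le> p x) \<and> (\<Sum>x\<in>UNIV. p x) = 1"

definition is_policy :: "('s::finite \<Rightarrow> 'a::finite \<Rightarrow> real) \<Rightarrow> bool" where
  "is_policy pol \<longleftrightarrow> (\<forall>s. is_dist (pol s))"

definition mdp_assms ::
  "('s::finite \<Rightarrow> 'a::finite \<Rightarrow> 's \<Rightarrow> real) \<Rightarrow> ('s \<Rightarrow> real) \<Rightarrow> real \<Rightarrow> bool" where
  "mdp_assms P rho0 gamma \<longleftrightarrow>
     (\<forall>s a. is_dist (P s a)) \<and> is_dist rho0 \<and> (\<forall>s. 0 < rho0 s) \<and> 0 < gamma \<and> gamma < 1"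

definition Ppi :: "('s::finite \<Rightarrow> 'a::finite \<Rightarrow> 's \<Rightarrow> real) \<Rightarrow> ('s \<Rightarrow> 'a \<Rightarrow> real) \<Rightarrow> 's \<Rightarrow> 's \<Rightarrow> real" where
  "Ppi P pol s s' = (\<Sum>a\<in>UNIV. pol s a * P s a s')"

fun Pstep :: "('s::finite \<Rightarrow> 'a::finite \<Rightarrow> 's \<Rightarrow> real) \<Rightarrow> ('s \<Rightarrow> 'a \<Rightarrow> real) \<Rightarrow> nat \<Rightarrow> 's \<Rightarrow> 's \<Rightarrow> real" where
  "Pstep P pol 0 s s' = (if s = s' then 1 else 0)"
| "Pstep P pol (Suc t) s s' = (\<Sum>s''\<in>UNIV. Pstep P pol t s s'' * Ppi P pol s'' s')"

definition state_prob :: "('s::finite \<Rightarrow> 'a::finite \<Rightarrow> 's \<Rightarrow> real) \<Rightarrow> ('s \<Rightarrow> real) \<Rightarrow> ('s \<Rightarrow> 'a \<Rightarrow> real) \<Rightarrow> nat \<Rightarrow> 's \<Rightarrow> real" where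
  "state_prob P rho0 pol t s = (\<Sum>s0\<in>UNIV. rho0 s0 * Pstep P pol t s0 s)"

definition rpi :: "('s::finite \<Rightarrow> 'a::finite \<Rightarrow> real) \<Rightarrow> ('s \<Rightarrow> 'a \<Rightarrow> real) \<Rightarrow> 's \<Rightarrow> real" where
  "rpi r pol s = (\<Sum>a\<in>UNIV. pol s a * r s a)"

definition eta where
  "eta P r rho0 gamma pol = (\<Sum>t. gamma ^ t * (\<Sum>s\<in>UNIV. state_prob P rho0 pol t s * rpi r pol s))"

definition rho where
  "rho P rho0 gamma pol s = (\<Sum>t. gamma ^ t * state_prob P rho0 pol t s)"

definition Vf where
  "Vf P r gamma pol s = (\<Sum>l. gamma ^ l * (\<Sum>s'\<in>UNIV. Pstep P pol l s s' * rpi r pol s'))"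

(* Q_pi(s,a) = E_pi[sum_l gamma^l r(s_l,a_l) | s_0 = s, a_0 = a]:
   the l = 0 term is r(s,a); for l+1, s_1 ~ P(.|s,a) and then l further pol-steps *)
definition Qf where
  "Qf P r gamma pol s a = r s a +
     (\<Sum>l. gamma ^ (Suc l) * (\<Sum>s1\<in>UNIV. P s a s1 * (\<Sum>s'\<in>UNIV. Pstep P pol l s1 s' * rpi r pol s')))"

definition Adv where
  "Adv P r gamma pol s a = Qf P r gamma pol s a - Vf P r gamma pol s"

definition policy_adv where
  "policy_adv P r rho0 gamma pol pol' =
     (\<Sum>s\<in>UNIV. rho P rho0 gamma pol s * (\<Sum>a\<in>UNIV. pol' s a * Adv P r gamma pol s a))"

definition surrogate where
  "surrogate P r rho0 gamma pol pol' = eta P r rho0 gamma pol + policy_adv P r rho0 gamma pol pol'"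

definition opt_adv where
  "opt_adv P r rho0 gamma pol = (SUP pol'\<in>{pol'. is_policy pol'}. policy_adv P r rho0 gamma pol pol')"

definition dtv :: "('x::finite \<Rightarrow> real) \<Rightarrow> ('x \<Rightarrow> real) \<Rightarrow> real" where
  "dtv p q = (1/2) * (\<Sum>x\<in>UNIV. \<bar>p x - q x\<bar>)"

definition tr_div where
  "tr_div P rho0 gamma pol pol' = (\<Sum>s\<in>UNIV. rho P rho0 gamma pol s * dtv (pol s) (pol' s))"

end

theory Submission
  imports Defs
begin

text \<open>
  The policy advantage of \<open>\<pi>\<close> with respect to itself vanishes, because \<open>V\<^sub>\<pi>\<close> is the
  \<open>\<pi>\<close>-average of \<open>Q\<^sub>\<pi>\<close>, and it is maximised by the greedy policy \<open>\<pi>\<^sup>*\<close>, which picks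
  an action of maximal advantage in every state.  The mixture
  \<open>(1 - \<alpha>) \<pi> + \<alpha> \<pi>\<^sup>*\<close> with \<open>\<alpha> = min 1 ((1 - \<gamma>) \<delta>)\<close> has policy advantage \<open>\<alpha> A\<^sup>*\<^sub>\<pi>\<close>,
  and since the total variation distance is at most 1 and the discounted visitation
  frequencies have total mass \<open>1 / (1 - \<gamma>)\<close>, it lies in the trust region.  The optimal
  solution of the subproblem therefore gains at least as much.
\<close>

lemma dist_le_1:
  assumes "is_dist p" shows "p x \<le> 1"
proof -
  have "p x \<le> (\<Sum>y\<in>UNIV. p y)"
    by (rule member_le_sum) (use assms in \<open>auto simp: is_dist_def\<close>)
  then show ?thesis using assms by (simp add: is_dist_def)
qed

lemma dist_average_abs_le:
  assumes "is_dist p" and "\<And>x. \<bar>f x\<bar> \<le> B"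
  shows "\<bar>\<Sum>x\<in>UNIV. p x * f x\<bar> \<le> B"
proof -
  have "\<bar>\<Sum>x\<in>UNIV. p x * f x\<bar> \<le> (\<Sum>x\<in>UNIV. p x * B)"
    by (rule order_trans[OF sum_abs], rule sum_mono)
       (use assms in \<open>auto simp: is_dist_def abs_mult intro: mult_left_mono\<close>)
  also have "\<dots> = B" using assms(1) by (simp add: is_dist_def sum_distrib_right[symmetric])
  finally show ?thesis .
qed

lemma is_dist_kernel_average:
  assumes "is_dist p" and "\<And>x. is_dist (K x)"
  shows "is_dist (\<lambda>y. \<Sum>x\<in>UNIV. p x * K x y)"
proof -
  have "(\<Sum>y\<in>UNIV. \<Sum>x\<in>UNIV. p x * K x y) = (\<Sum>x\<in>UNIV. p x * (\<Sum>y\<in>UNIV. K x y))"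
    by (subst sum.swap) (simp add: sum_distrib_left)
  then show ?thesis using assms by (auto simp: is_dist_def intro!: sum_nonneg)
qed

lemma dtv_le_1:
  assumes "is_dist p" "is_dist q" shows "dtv p q \<le> 1"
proof -
  have "(\<Sum>x\<in>UNIV. \<bar>p x - q x\<bar>) \<le> (\<Sum>x\<in>UNIV. p x + q x)"
    by (rule sum_mono) (use assms in \<open>auto simp: is_dist_def abs_le_iff\<close>)
  also have "\<dots> = 2" using assms by (simp add: is_dist_def sum.distrib)
  finally show ?thesis unfolding dtv_def by simp
qed

lemma summable_discounted_bounded:
  fixes gamma :: real
  assumes "0 < gamma" "gamma < 1" "\<And>t. \<bar>x t\<bar> \<le> B"
  shows "summable (\<lambda>t. gamma ^ t * x t)"
proof (rule summable_comparison_test')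
  show "summable (\<lambda>t. B * gamma ^ t)" using assms by (intro summable_mult summable_geometric) auto
  show "norm (gamma ^ n * x n) \<le> B * gamma ^ n" for n
    using assms mult_left_mono[OF assms(3)[of n], of "gamma ^ n"] by (simp add: abs_mult mult.commute)
qed

lemma is_dist_Ppi:
  assumes "\<forall>s a. is_dist (P s a)" "is_policy pol"
  shows "is_dist (Ppi P pol s)"
  unfolding Ppi_def[abs_def]
  using is_dist_kernel_average[of "pol s" "P s"] assms by (simp add: is_policy_def)

lemma is_dist_Pstep:
  assumes "\<forall>s a. is_dist (P s a)" "is_policy pol"
  shows "is_dist (Pstep P pol t s)"
proof (induction t)
  case 0
  show ?case by (simp add: is_dist_def)
next
  case (Suc t)
  show ?case
    using is_dist_kernel_average[OF Suc is_dist_Ppi[OF assms]] by (simp add: fun_eq_iff)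
qed

lemma Pstep_Suc_left:
  "Pstep P pol (Suc t) s s' = (\<Sum>s1\<in>UNIV. Ppi P pol s s1 * Pstep P pol t s1 s')"
proof (induction t arbitrary: s')
  case 0
  show ?case by (simp add: mult_delta_left mult_delta_right)
next
  case (Suc t)
  have "Pstep P pol (Suc (Suc t)) s s'
      = (\<Sum>s''\<in>UNIV. \<Sum>s1\<in>UNIV. Ppi P pol s s1 * (Pstep P pol t s1 s'' * Ppi P pol s'' s'))"
    using Suc by (simp only: Pstep.simps sum_distrib_right mult.assoc)
  also have "\<dots> = (\<Sum>s1\<in>UNIV. Ppi P pol s s1 * Pstep P pol (Suc t) s1 s')"
    by (subst sum.swap) (simp add: sum_distrib_left)
  finally show ?case .
qed

lemma is_dist_state_prob:
  assumes "\<forall>s a. is_dist (P s a)" "is_policy pol" "is_dist rho0"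
  shows "is_dist (state_prob P rho0 pol t)"
  unfolding state_prob_def[abs_def]
  by (rule is_dist_kernel_average[OF assms(3) is_dist_Pstep[OF assms(1,2)]])

definition step_reward ::
  "('s::finite \<Rightarrow> 'a::finite \<Rightarrow> 's \<Rightarrow> real) \<Rightarrow> ('s \<Rightarrow> 'a \<Rightarrow> real) \<Rightarrow> ('s \<Rightarrow> 'a \<Rightarrow> real) \<Rightarrow> nat \<Rightarrow> 's \<Rightarrow> real"
  where "step_reward P r pol l s = (\<Sum>s'\<in>UNIV. Pstep P pol l s s' * rpi r pol s')"

lemma step_reward_0: "step_reward P r pol 0 s = rpi r pol s"
  by (simp add: step_reward_def mult_delta_left)

lemma step_reward_Suc:
  "step_reward P r pol (Suc l) s = (\<Sum>s1\<in>UNIV. Ppi P pol s s1 * step_reward P r pol l s1)"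
proof -
  have "step_reward P r pol (Suc l) s
      = (\<Sum>s'\<in>UNIV. \<Sum>s1\<in>UNIV. Ppi P pol s s1 * (Pstep P pol l s1 s' * rpi r pol s'))"
    unfolding step_reward_def Pstep_Suc_left by (simp only: sum_distrib_right mult.assoc)
  also have "\<dots> = (\<Sum>s1\<in>UNIV. Ppi P pol s s1 * step_reward P r pol l s1)"
    unfolding step_reward_def by (subst sum.swap) (simp only: sum_distrib_left)
  finally show ?thesis .
qed

lemma abs_step_reward_le:
  assumes "\<forall>s a. is_dist (P s a)" "is_policy pol"
  shows "\<bar>step_reward P r pol l s\<bar> \<le> (\<Sum>s'\<in>UNIV. \<bar>rpi r pol s'\<bar>)"
  unfolding step_reward_def
  by (rule dist_average_abs_le[OF is_dist_Pstep[OF assms]])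
     (rule member_le_sum, auto)

lemma Vf_split_head:
  fixes gamma :: real
  assumes "\<forall>s a. is_dist (P s a)" "is_policy pol" "0 < gamma" "gamma < 1"
  shows "Vf P r gamma pol s = rpi r pol s + (\<Sum>l. gamma ^ Suc l * step_reward P r pol (Suc l) s)"
proof -
  have "summable (\<lambda>l. gamma ^ l * step_reward P r pol l s)"
    by (rule summable_discounted_bounded[OF assms(3,4) abs_step_reward_le[OF assms(1,2)]])
  from suminf_split_head[OF this] show ?thesis
    by (simp add: Vf_def step_reward_def[symmetric] step_reward_0)
qed

text \<open>The Bellman identity \<open>V\<^sub>\<pi>(s) = \<Sum>\<^sub>a \<pi>(a|s) Q\<^sub>\<pi>(s,a)\<close>: averaging the first
  transition \<open>P(\<cdot>|s,a)\<close> over \<open>\<pi>(\<cdot>|s)\<close> yields \<open>P\<^sub>\<pi>(s,\<cdot>)\<close>.\<close>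

lemma policy_average_Qf:
  fixes gamma :: real
  assumes dP: "\<forall>s a. is_dist (P s a)" and pol: "is_policy pol" and "0 < gamma" "gamma < 1"
  shows "(\<Sum>a\<in>UNIV. pol s a * Qf P r gamma pol s a) = Vf P r gamma pol s"
proof -
  let ?f = "step_reward P r pol"
  define G where "G a l = gamma ^ Suc l * (\<Sum>s1\<in>UNIV. P s a s1 * ?f l s1)" for a l
  have "summable (\<lambda>l. gamma ^ l * (\<Sum>s1\<in>UNIV. P s a s1 * ?f l s1))" for a
    using dist_average_abs_le[OF spec[OF spec[OF dP]] abs_step_reward_le[OF dP pol]]
    by (rule summable_discounted_bounded[OF assms(3,4)])
  then have G: "summable (G a)" for a
    unfolding G_def power_Suc mult.assoc by (rule summable_mult)
  have step: "(\<Sum>a\<in>UNIV. pol s a * G a l) = gamma ^ Suc l * ?f (Suc l) s" for l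
  proof -
    have "(\<Sum>a\<in>UNIV. pol s a * G a l)
        = gamma ^ Suc l * (\<Sum>a\<in>UNIV. \<Sum>s1\<in>UNIV. pol s a * P s a s1 * ?f l s1)"
      unfolding G_def by (simp add: sum_distrib_left mult_ac)
    also have "\<dots> = gamma ^ Suc l * ?f (Suc l) s"
      unfolding step_reward_Suc Ppi_def by (subst sum.swap) (simp add: sum_distrib_right)
    finally show ?thesis .
  qed
  have Q: "Qf P r gamma pol s a = r s a + suminf (G a)" for a
    unfolding Qf_def G_def step_reward_def ..
  have "(\<Sum>a\<in>UNIV. pol s a * Qf P r gamma pol s a) = rpi r pol s + (\<Sum>a\<in>UNIV. pol s a * suminf (G a))"
    unfolding Q rpi_def by (simp add: distrib_left sum.distrib)
  also have "\<dots> = rpi r pol s + (\<Sum>a\<in>UNIV. \<Sum>l. pol s a * G a l)"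
    by (simp add: suminf_mult[OF G])
  also have "\<dots> = rpi r pol s + (\<Sum>l. \<Sum>a\<in>UNIV. pol s a * G a l)"
    using suminf_sum[of UNIV "\<lambda>a l. pol s a * G a l"] summable_mult[OF G] by simp
  also have "\<dots> = rpi r pol s + (\<Sum>l. gamma ^ Suc l * ?f (Suc l) s)"
    using step by simp
  finally show ?thesis using Vf_split_head[OF assms] by simp
qed

lemma policy_average_Adv_eq_0:
  fixes gamma :: real
  assumes "\<forall>s a. is_dist (P s a)" "is_policy pol" "0 < gamma" "gamma < 1"
  shows "(\<Sum>a\<in>UNIV. pol s a * Adv P r gamma pol s a) = 0"
  using policy_average_Qf[OF assms, of s r] assms(2)
  by (simp add: Adv_def right_diff_distrib sum_subtractf sum_distrib_right[symmetric]
      is_policy_def is_dist_def)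

lemma policy_adv_self_eq_0:
  fixes gamma :: real
  assumes "\<forall>s a. is_dist (P s a)" "is_policy pol" "0 < gamma" "gamma < 1"
  shows "policy_adv P r rho0 gamma pol pol = 0"
  by (simp add: policy_adv_def policy_average_Adv_eq_0[OF assms])

lemma summable_discounted_state_prob:
  fixes gamma :: real
  assumes "\<forall>s a. is_dist (P s a)" "is_policy pol" "is_dist rho0" "0 < gamma" "gamma < 1"
  shows "summable (\<lambda>t. gamma ^ t * state_prob P rho0 pol t s)"
  using is_dist_state_prob[OF assms(1-3)] dist_le_1[OF is_dist_state_prob[OF assms(1-3)]]
  by (intro summable_discounted_bounded[OF assms(4,5), where B = 1]) (auto simp: is_dist_def)

lemma rho_nonneg:
  fixes gamma :: real
  assumes "\<forall>s a. is_dist (P s a)" "is_policy pol" "is_dist rho0" "0 < gamma" "gamma < 1"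
  shows "0 \<le> rho P rho0 gamma pol s"
  unfolding rho_def using assms is_dist_state_prob[OF assms(1-3)]
  by (intro suminf_nonneg summable_discounted_state_prob) (auto simp: is_dist_def)

lemma sum_rho:
  fixes gamma :: real
  assumes "\<forall>s a. is_dist (P s a)" "is_policy pol" "is_dist rho0" "0 < gamma" "gamma < 1"
  shows "(\<Sum>s\<in>UNIV. rho P rho0 gamma pol s) = 1 / (1 - gamma)"
proof -
  have "(\<Sum>s\<in>UNIV. rho P rho0 gamma pol s) = (\<Sum>t. \<Sum>s\<in>UNIV. gamma ^ t * state_prob P rho0 pol t s)"
    unfolding rho_def by (rule suminf_sum[symmetric]) (rule summable_discounted_state_prob[OF assms])
  also have "\<dots> = (\<Sum>t. gamma ^ t)"
    using is_dist_state_prob[OF assms(1-3)] by (simp add: sum_distrib_left[symmetric] is_dist_def)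
  also have "\<dots> = 1 / (1 - gamma)" using assms by (simp add: suminf_geometric)
  finally show ?thesis .
qed

lemma tr_div_le:
  fixes gamma :: real
  assumes "\<forall>s a. is_dist (P s a)" "is_policy pol" "is_dist rho0" "0 < gamma" "gamma < 1"
    and "\<And>s. dtv (pol s) (pol' s) \<le> c"
  shows "tr_div P rho0 gamma pol pol' \<le> c / (1 - gamma)"
proof -
  have "tr_div P rho0 gamma pol pol' \<le> (\<Sum>s\<in>UNIV. rho P rho0 gamma pol s * c)"
    unfolding tr_div_def
    by (intro sum_mono mult_left_mono assms(6) rho_nonneg[OF assms(1-5)])
  also have "\<dots> = c / (1 - gamma)"
    by (simp add: sum_distrib_right[symmetric] sum_rho[OF assms(1-5)])
  finally show ?thesis .
qed

definition greedy_policy :: "('s \<Rightarrow> 'a::finite \<Rightarrow> real) \<Rightarrow> 's \<Rightarrow> 'a \<Rightarrow> real" where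
  "greedy_policy f s a = (if a = (ARG_MAX (f s) b. True) then 1 else 0)"

lemma is_policy_greedy_policy: "is_policy (greedy_policy f)"
  by (simp add: is_policy_def is_dist_def greedy_policy_def)

lemma greedy_policy_average_ge:
  fixes f :: "'s::finite \<Rightarrow> 'a::finite \<Rightarrow> real"
  assumes "is_dist q"
  shows "(\<Sum>a\<in>UNIV. q a * f s a) \<le> (\<Sum>a\<in>UNIV. greedy_policy f s a * f s a)"
proof -
  define b where "b = (ARG_MAX (f s) a. True)"
  obtain c where c: "f s a \<le> f s c" for a
    using Max_in[of "range (f s)"] Max_ge[of "range (f s)"] by fastforce
  have max: "f s a \<le> f s b" for a
    unfolding b_def by (rule arg_maxI[where P = "\<lambda>_. True"]) (use c in \<open>auto simp: not_less\<close>)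
  have "(\<Sum>a\<in>UNIV. q a * f s a) \<le> (\<Sum>a\<in>UNIV. q a * f s b)"
    using assms max by (intro sum_mono mult_left_mono) (auto simp: is_dist_def)
  also have "\<dots> = f s b" using assms by (simp add: is_dist_def sum_distrib_right[symmetric])
  finally show ?thesis by (simp add: greedy_policy_def b_def mult_delta_left)
qed

lemma opt_adv_eq_greedy:
  fixes gamma :: real
  assumes "\<forall>s a. is_dist (P s a)" "is_policy pol" "is_dist rho0" "0 < gamma" "gamma < 1"
  shows "opt_adv P r rho0 gamma pol
           = policy_adv P r rho0 gamma pol (greedy_policy (Adv P r gamma pol))"
proof -
  have "policy_adv P r rho0 gamma pol q \<le> policy_adv P r rho0 gamma pol (greedy_policy (Adv P r gamma pol))"
    if "is_policy q" for q
    unfolding policy_adv_def using that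
    by (intro sum_mono mult_left_mono rho_nonneg[OF assms] greedy_policy_average_ge)
       (simp add: is_policy_def)
  then show ?thesis
    unfolding opt_adv_def by (intro cSup_eq_maximum) (auto intro: is_policy_greedy_policy)
qed

definition mix_policy ::
  "real \<Rightarrow> ('s \<Rightarrow> 'a \<Rightarrow> real) \<Rightarrow> ('s \<Rightarrow> 'a \<Rightarrow> real) \<Rightarrow> 's \<Rightarrow> 'a \<Rightarrow> real"
  where "mix_policy \<alpha> p q s a = (1 - \<alpha>) * p s a + \<alpha> * q s a"

lemma is_policy_mix_policy:
  assumes "0 \<le> \<alpha>" "\<alpha> \<le> 1" "is_policy p" "is_policy q"
  shows "is_policy (mix_policy \<alpha> p q)"
  using assms
  by (auto simp: is_policy_def is_dist_def mix_policy_def sum.distrib sum_distrib_left[symmetric])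

lemma policy_adv_mix_policy:
  "policy_adv P r rho0 gamma pol (mix_policy \<alpha> p q)
     = (1 - \<alpha>) * policy_adv P r rho0 gamma pol p + \<alpha> * policy_adv P r rho0 gamma pol q"
  unfolding policy_adv_def mix_policy_def
  by (simp add: ring_distribs sum.distrib sum_subtractf sum_distrib_left mult_ac)

lemma dtv_mix_policy:
  assumes "0 \<le> \<alpha>"
  shows "dtv (p s) (mix_policy \<alpha> p q s) = \<alpha> * dtv (p s) (q s)"
proof -
  have "p s a - mix_policy \<alpha> p q s a = \<alpha> * (p s a - q s a)" for a
    by (simp add: mix_policy_def algebra_simps)
  then have "\<bar>p s a - mix_policy \<alpha> p q s a\<bar> = \<alpha> * \<bar>p s a - q s a\<bar>" for a
    using assms by (simp add: abs_mult)
  then show ?thesis by (simp add: dtv_def sum_distrib_left)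
qed

theorem mainTheorem2:
  fixes P :: "'s::finite \<Rightarrow> 'a::finite \<Rightarrow> 's \<Rightarrow> real"
    and r :: "'s \<Rightarrow> 'a \<Rightarrow> real"
    and rho0 :: "'s \<Rightarrow> real"
    and gamma delta :: real
    and pol pit :: "'s \<Rightarrow> 'a \<Rightarrow> real"
  assumes "mdp_assms P rho0 gamma"
    and "is_policy pol"
    and "delta > 0"
    and "is_policy pit"
    and "tr_div P rho0 gamma pol pit \<le> delta"
    and "\<forall>pol'. is_policy pol' \<and> tr_div P rho0 gamma pol pol' \<le> delta \<longrightarrow>
           surrogate P r rho0 gamma pol pol' \<le> surrogate P r rho0 gamma pol pit"
  shows "surrogate P r rho0 gamma pol pit - surrogate P r rho0 gamma pol pol
           \<ge> min 1 ((1 - gamma) * delta) * opt_adv P r rho0 gamma pol"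
proof -
  have mdp: "\<forall>s a. is_dist (P s a)" "is_dist rho0" "0 < gamma" "gamma < 1"
    using assms(1) by (auto simp: mdp_assms_def)
  note setting = mdp(1) assms(2) mdp(2-4)
  define \<alpha> where "\<alpha> = min 1 ((1 - gamma) * delta)"
  have \<alpha>: "0 \<le> \<alpha>" "\<alpha> \<le> 1" "\<alpha> / (1 - gamma) \<le> delta"
    using mdp assms(3) by (auto simp: \<alpha>_def divide_le_eq mult.commute)
  let ?greedy = "greedy_policy (Adv P r gamma pol)"
  let ?mix = "mix_policy \<alpha> pol ?greedy"
  have "dtv (pol s) (?greedy s) \<le> 1" for s
    using assms(2) is_policy_greedy_policy by (intro dtv_le_1) (auto simp: is_policy_def)
  then have "tr_div P rho0 gamma pol ?mix \<le> \<alpha> / (1 - gamma)"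
    using \<alpha>(1) by (intro tr_div_le[OF setting]) (simp add: dtv_mix_policy mult_left_le)
  then have "surrogate P r rho0 gamma pol ?mix \<le> surrogate P r rho0 gamma pol pit"
    using assms(2,6) \<alpha> is_policy_mix_policy is_policy_greedy_policy by force
  then show ?thesis
    by (simp add: surrogate_def policy_adv_mix_policy policy_adv_self_eq_0[OF mdp(1) assms(2) mdp(3,4)]
        opt_adv_eq_greedy[OF setting] \<alpha>_def)
qed

end
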